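(* Let $m$ be odd, let $f:\mathbb{Z}_m\to\{\pm1,\pm\mathrm{i}\}$ be a quaternary sequence, and let $\phi(0,k)=\mathrm{Re}f(k)-\mathrm{Im}f(k)$, $\phi(1,k)=\mathrm{Re}f(k)+\mathrm{Im}f(k)$ for $k\in\mathbb{Z}_m$. Put \[ B=\{j\in\mathbb{Z}_m:\phi(0,j)=-1\},\qquad D=\{j\in\mathbb{Z}_m:\phi(1,j)=-1\}. \] Then $f$ is an OQS if and only if $B$ and $D$ are $2$-$\{m;|B|,|D|;|B|+|D|-\frac{m+1}{2}\}$ ASDS and the multiset $B-D$ is symmetric.
   Context: $\mathrm{i}=\sqrt{-1}$. A quaternary sequence $f:\mathbb{Z}_m\to\{\pm1,\pm\mathrm{i}\}$ of odd length $m$ is an OQS if $|R_f(w)|=1$ for all $1\le w\le m-1$, where $R_f(w)=\sum_{k\in\mathbb{Z}_m}f(k)\overline{f(k+w)}$. For $B,D\subseteq\mathbb{Z}_m$ and $a\in\mathbb{Z}_m\setminus\{0\}$, let $N_{B,D}(a)=|\{(x,x')\in B\times B: x-x'\equiv a\}|+|\{(y,y')\in D\times D: y-y'\equiv a\}|$. For an integer $\mu$, $B$ and $D$ are $2$-$\{m;k,r;\mu\}$ ASDS if $|B|=k$, $|D|=r$ and $N_{B,D}(a)\in\{\mu,\mu+1\}$ for every $a\in\mathbb{Z}_m\setminus\{0\}$. The multiset $B-D$ of differences $x-y \bmod m$, $(x,y)\in B\times D$, is symmetric (closed under negation) if for every $w\in\mathbb{Z}_m$, $|\{(x,y)\in B\times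 D: x-y\equiv w\}|=|\{(x,y)\in B\times D: x-y\equiv -w\}|$. *)

theory Defs
  imports Complex_Main
begin

text \<open>Z_m is modelled as {0..<m} (nat) with arithmetic mod m.\<close>

definition zdiff :: "nat \<Rightarrow> nat \<Rightarrow> nat \<Rightarrow> nat" where
  "zdiff m x y = (x + m - y) mod m"

definition quaternary :: "nat \<Rightarrow> (nat \<Rightarrow> complex) \<Rightarrow> bool" where
  "quaternary m f \<longleftrightarrow> (\<forall>k<m. f k \<in> {1, -1, \<i>, -\<i>})"

definition autocorr :: "nat \<Rightarrow> (nat \<Rightarrow> complex) \<Rightarrow> nat \<Rightarrow> complex" where
  "autocorr m f w = (\<Sum>k<m. f k * cnj (f ((k + w) mod m)))"

definition OQS :: "nat \<Rightarrow> (nat \<Rightarrow> complex) \<Rightarrow> bool" where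
  "OQS m f \<longleftrightarrow> odd m \<and> quaternary m f \<and> (\<forall>w\<in>{1..m-1}. cmod (autocorr m f w) = 1)"

definition Ncount :: "nat \<Rightarrow> nat set \<Rightarrow> nat set \<Rightarrow> nat \<Rightarrow> nat" where
  "Ncount m B D a = card {(x, x'). x \<in> B \<and> x' \<in> B \<and> zdiff m x x' = a}
                  + card {(y, y'). y \<in> D \<and> y' \<in> D \<and> zdiff m y y' = a}"

definition ASDS2 :: "nat \<Rightarrow> nat \<Rightarrow> nat \<Rightarrow> int \<Rightarrow> nat set \<Rightarrow> nat set \<Rightarrow> bool" where
  "ASDS2 m k r \<mu> B D \<longleftrightarrow> B \<subseteq> {0..<m} \<and> D \<subseteq> {0..<m} \<and> card B = k \<and> card D = r \<and>
     (\<forall>a\<in>{1..<m}. int (Ncount m B D a) \<in> {\<mu>, \<mu> + 1})"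

definition diff_symmetric :: "nat \<Rightarrow> nat set \<Rightarrow> nat set \<Rightarrow> bool" where
  "diff_symmetric m B D \<longleftrightarrow> (\<forall>w<m.
     card {(x, y). x \<in> B \<and> y \<in> D \<and> zdiff m x y = w}
   = card {(x, y). x \<in> B \<and> y \<in> D \<and> zdiff m x y = (m - w) mod m})"

end

theory Submission
  imports Defs
begin

text \<open>
  With \<open>a = \<phi>(0,\<cdot>)\<close> and \<open>b = \<phi>(1,\<cdot>)\<close> the sequence decomposes as
  \<open>f = ((1 - \<i>) a + (1 + \<i>) b) / 2\<close>, so \<open>R\<^sub>f(w)\<close> is half of
  \<open>R\<^sub>a(w) + R\<^sub>b(w) + \<i> (C\<^sub>b\<^sub>a(w) - C\<^sub>a\<^sub>b(w))\<close> for the periodic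
  (cross-)correlations of these \<open>\<plusminus>1\<close> sequences. Correlations of \<open>\<plusminus>1\<close> sequences count
  differences of their \<open>-1\<close> positions, which gives
  \<open>Re R\<^sub>f(w) = m - 2|B| - 2|D| + 2 N(w)\<close>, an odd integer, and
  \<open>Im R\<^sub>f(w)\<close> = twice the number of representations of \<open>w\<close> in \<open>B - D\<close> minus that of \<open>-w\<close>.
  A Gaussian integer with odd real part has modulus 1 iff it is \<open>\<plusminus>1\<close>, which is exactly
  \<open>N(w) \<in> {\<mu>, \<mu> + 1}\<close> together with the symmetry of \<open>B - D\<close> at \<open>w\<close>.
\<close>

lemma mod_less_double: "(a::nat) < 2 * m \<Longrightarrow> a mod m = (if a < m then a else a - m)"
  by (simp add: mod_if)

lemma zdiff_eq_iff:
  assumes "x < m" "y < m" "w < m"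
  shows "zdiff m x y = w \<longleftrightarrow> x = (y + w) mod m"
  using assms unfolding zdiff_def by (auto simp: mod_less_double)

lemma zdiff_eq_neg_iff:
  assumes "x < m" "y < m" "w < m"
  shows "zdiff m x y = (m - w) mod m \<longleftrightarrow> zdiff m y x = w"
  using assms unfolding zdiff_def by (auto simp: mod_less_double)

lemma bij_betw_add_mod:
  fixes w m :: nat
  assumes "w < m"
  shows "bij_betw (\<lambda>k. (k + w) mod m) {..<m} {..<m}"
proof -
  have inj: "inj_on (\<lambda>k. (k + w) mod m) {..<m}"
  proof (rule inj_onI)
    fix x y :: nat assume "x \<in> {..<m}" "y \<in> {..<m}" "(x + w) mod m = (y + w) mod m"
    then show "x = y"
      using assms mod_less_double[of "x + w" m] mod_less_double[of "y + w" m]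
      by (auto split: if_splits)
  qed
  moreover have "(\<lambda>k. (k + w) mod m) ` {..<m} \<subseteq> {..<m}"
    using assms by auto
  ultimately show ?thesis
    by (simp add: bij_betw_imageI endo_inj_surj)
qed

lemma sum_add_mod:
  fixes w m :: nat
  assumes "w < m"
  shows "(\<Sum>k<m. g ((k + w) mod m)) = (\<Sum>k<m. g k)"
  using sum.reindex_bij_betw[OF bij_betw_add_mod[OF assms]] .

lemma card_zdiff_eq:
  assumes "X \<subseteq> {..<m}" "Y \<subseteq> {..<m}" "w < m"
  shows "card {(x, y). x \<in> X \<and> y \<in> Y \<and> zdiff m x y = w} = card {k \<in> Y. (k + w) mod m \<in> X}"
proof -
  have "zdiff m x y = w \<longleftrightarrow> x = (y + w) mod m" if "x \<in> X" "y \<in> Y" for x y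
    using assms that by (intro zdiff_eq_iff) auto
  then have "{(x, y). x \<in> X \<and> y \<in> Y \<and> zdiff m x y = w}
      = {(x, y). x \<in> X \<and> y \<in> Y \<and> x = (y + w) mod m}"
    by blast
  also have "\<dots> = (\<lambda>k. ((k + w) mod m, k)) ` {k \<in> Y. (k + w) mod m \<in> X}"
    by auto
  finally show ?thesis
    by (simp add: card_image inj_on_def)
qed

lemma card_zdiff_eq_neg:
  assumes "X \<subseteq> {..<m}" "Y \<subseteq> {..<m}" "w < m"
  shows "card {(x, y). x \<in> X \<and> y \<in> Y \<and> zdiff m x y = (m - w) mod m}
       = card {k \<in> X. (k + w) mod m \<in> Y}"
proof -
  have "zdiff m x y = (m - w) mod m \<longleftrightarrow> zdiff m y x = w" if "x \<in> X" "y \<in> Y" for x y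
    using assms that by (intro zdiff_eq_neg_iff) auto
  then have "{(x, y). x \<in> X \<and> y \<in> Y \<and> zdiff m x y = (m - w) mod m}
      = prod.swap ` {(y, x). y \<in> Y \<and> x \<in> X \<and> zdiff m y x = w}"
    by auto
  then show ?thesis
    using card_zdiff_eq[OF assms(2,1,3)] by (simp add: card_image)
qed

definition sign_ind :: "nat set \<Rightarrow> nat \<Rightarrow> int" where
  "sign_ind X k = (if k \<in> X then -1 else 1)"

definition cross_corr :: "nat \<Rightarrow> (nat \<Rightarrow> int) \<Rightarrow> (nat \<Rightarrow> int) \<Rightarrow> nat \<Rightarrow> int" where
  "cross_corr m a b w = (\<Sum>k<m. a k * b ((k + w) mod m))"

lemma cross_corr_sign_ind:
  assumes "X \<subseteq> {..<m}" "Y \<subseteq> {..<m}" "w < m"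
  shows "cross_corr m (sign_ind X) (sign_ind Y) w
       = int m - 2 * int (card X) - 2 * int (card Y) + 4 * int (card {k \<in> X. (k + w) mod m \<in> Y})"
proof -
  have "sign_ind X k * sign_ind Y ((k + w) mod m)
      = 1 - 2 * of_bool (k \<in> X) - 2 * of_bool ((k + w) mod m \<in> Y)
          + 4 * of_bool (k \<in> X \<and> (k + w) mod m \<in> Y)" for k
    by (simp add: sign_ind_def)
  moreover have "(\<Sum>k<m. of_bool ((k + w) mod m \<in> Y) :: int) = (\<Sum>k<m. of_bool (k \<in> Y))"
    using sum_add_mod[OF assms(3)] .
  moreover have "{..<m} \<inter> {k \<in> X. (k + w) mod m \<in> Y} = {k \<in> X. (k + w) mod m \<in> Y}"
    using assms(1) by blast
  ultimately show ?thesis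
    using assms unfolding cross_corr_def
    by (simp add: sum.distrib sum_subtractf sum_distrib_left[symmetric] Int_absorb1 conj_commute)
qed

lemma quaternary_sign_ind:
  assumes "quaternary m f"
    and "B = {j \<in> {0..<m}. Re (f j) - Im (f j) = -1}"
    and "D = {j \<in> {0..<m}. Re (f j) + Im (f j) = -1}"
    and "k < m"
  shows "f k = ((1 - \<i>) * of_int (sign_ind B k) + (1 + \<i>) * of_int (sign_ind D k)) / 2"
proof -
  have "f k \<in> {1, -1, \<i>, -\<i>}"
    using assms(1,4) unfolding quaternary_def by blast
  then show ?thesis
    using assms(2-4) by (auto simp: sign_ind_def complex_eq_iff)
qed

lemma autocorr_eq_cross_corr:
  assumes f: "\<forall>k<m. f k = ((1 - \<i>) * of_int (a k) + (1 + \<i>) * of_int (b k)) / 2"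
    and "w < m"
  shows "autocorr m f w = (of_int (cross_corr m a a w + cross_corr m b b w)
           + \<i> * of_int (cross_corr m b a w - cross_corr m a b w)) / 2"
proof -
  have "autocorr m f w = (\<Sum>k<m. (of_int (a k * a ((k + w) mod m) + b k * b ((k + w) mod m))
         + \<i> * of_int (b k * a ((k + w) mod m) - a k * b ((k + w) mod m))) / 2)"
    unfolding autocorr_def
  proof (rule sum.cong)
    fix k assume "k \<in> {..<m}"
    then have fk: "f k = ((1 - \<i>) * of_int (a k) + (1 + \<i>) * of_int (b k)) / 2"
      and fkw: "f ((k + w) mod m) = ((1 - \<i>) * of_int (a ((k + w) mod m))
                                + (1 + \<i>) * of_int (b ((k + w) mod m))) / 2"
      using f \<open>w < m\<close> by auto
    show "f k * cnj (f ((k + w) mod m))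
      = (of_int (a k * a ((k + w) mod m) + b k * b ((k + w) mod m))
         + \<i> * of_int (b k * a ((k + w) mod m) - a k * b ((k + w) mod m))) / 2"
      unfolding fk fkw by (simp add: complex_eq_iff field_simps)
  qed simp
  also have "\<dots> = (of_int (cross_corr m a a w + cross_corr m b b w)
           + \<i> * of_int (cross_corr m b a w - cross_corr m a b w)) / 2"
    unfolding cross_corr_def
    by (simp add: sum_divide_distrib[symmetric] sum.distrib sum_subtractf sum_distrib_left[symmetric])
  finally show ?thesis .
qed

lemma cmod_odd_int_eq_1_iff:
  assumes "odd p"
  shows "cmod (of_int p + \<i> * of_int q) = 1 \<longleftrightarrow> (p = 1 \<or> p = -1) \<and> q = 0"
proof -
  have "cmod (of_int p + \<i> * of_int q) = 1 \<longleftrightarrow> real_of_int (p\<^sup>2 + q\<^sup>2) = 1"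
    by (simp add: cmod_def)
  also have "\<dots> \<longleftrightarrow> p\<^sup>2 + q\<^sup>2 = 1"
    by (simp only: of_int_eq_1_iff)
  also have "\<dots> \<longleftrightarrow> (p = 1 \<or> p = -1) \<and> q = 0"
    using assms
    by (smt (verit, ccfv_SIG) even_zero power2_eq_1_iff sum_power2_eq_zero_iff zero_le_power_eq_numeral)
  finally show ?thesis .
qed

lemma autocorr_eq_counts:
  assumes "quaternary m f"
    and B: "B = {j \<in> {0..<m}. Re (f j) - Im (f j) = -1}"
    and D: "D = {j \<in> {0..<m}. Re (f j) + Im (f j) = -1}"
    and "w < m"
  shows "autocorr m f w
    = of_int (int m - 2 * int (card B) - 2 * int (card D) + 2 * int (Ncount m B D w))
      + \<i> * of_int (2 * (int (card {(x, y). x \<in> B \<and> y \<in> D \<and> zdiff m x y = w})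
                        - int (card {(x, y). x \<in> B \<and> y \<in> D \<and> zdiff m x y = (m - w) mod m})))"
proof -
  have sub: "B \<subseteq> {..<m}" "D \<subseteq> {..<m}"
    using B D by auto
  have "autocorr m f w = (of_int (cross_corr m (sign_ind B) (sign_ind B) w + cross_corr m (sign_ind D) (sign_ind D) w)
      + \<i> * of_int (cross_corr m (sign_ind D) (sign_ind B) w - cross_corr m (sign_ind B) (sign_ind D) w)) / 2"
    using quaternary_sign_ind[OF assms(1-3)] \<open>w < m\<close> by (intro autocorr_eq_cross_corr) auto
  moreover have "Ncount m B D w = card {k \<in> B. (k + w) mod m \<in> B} + card {k \<in> D. (k + w) mod m \<in> D}"
    unfolding Ncount_def using card_zdiff_eq[OF sub(1,1) \<open>w < m\<close>] card_zdiff_eq[OF sub(2,2) \<open>w < m\<close>]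
    by simp
  moreover note card_zdiff_eq[OF sub \<open>w < m\<close>] card_zdiff_eq_neg[OF sub \<open>w < m\<close>]
  ultimately show ?thesis
    using \<open>w < m\<close> by (simp add: cross_corr_sign_ind sub complex_eq_iff)
qed

lemma autocorr_unimodular_iff:
  assumes "odd m" "quaternary m f"
    and "B = {j \<in> {0..<m}. Re (f j) - Im (f j) = -1}"
    and "D = {j \<in> {0..<m}. Re (f j) + Im (f j) = -1}"
    and "w < m"
  shows "cmod (autocorr m f w) = 1 \<longleftrightarrow>
    int (Ncount m B D w) \<in> {int (card B) + int (card D) - int ((m + 1) div 2),
                            int (card B) + int (card D) - int ((m + 1) div 2) + 1}
    \<and> card {(x, y). x \<in> B \<and> y \<in> D \<and> zdiff m x y = w}
      = card {(x, y). x \<in> B \<and> y \<in> D \<and> zdiff m x y = (m - w) mod m}"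
proof -
  let ?P = "int m - 2 * int (card B) - 2 * int (card D) + 2 * int (Ncount m B D w)"
  let ?Q = "2 * (int (card {(x, y). x \<in> B \<and> y \<in> D \<and> zdiff m x y = w})
                - int (card {(x, y). x \<in> B \<and> y \<in> D \<and> zdiff m x y = (m - w) mod m}))"
  obtain t where t: "m = 2 * t + 1"
    using \<open>odd m\<close> oddE by blast
  have "cmod (autocorr m f w) = 1 \<longleftrightarrow> (?P = 1 \<or> ?P = -1) \<and> ?Q = 0"
    unfolding autocorr_eq_counts[OF assms(2-5)] using \<open>odd m\<close>
    by (intro cmod_odd_int_eq_1_iff) simp
  then show ?thesis
    using t by auto
qed

theorem theorem3:
  fixes m :: nat and f :: "nat \<Rightarrow> complex" and B D :: "nat set"
  assumes "odd m"
    and "quaternary m f"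
    and "B = {j \<in> {0..<m}. Re (f j) - Im (f j) = -1}"
    and "D = {j \<in> {0..<m}. Re (f j) + Im (f j) = -1}"
  shows "OQS m f \<longleftrightarrow>
    ASDS2 m (card B) (card D) (int (card B) + int (card D) - int ((m + 1) div 2)) B D
    \<and> diff_symmetric m B D"
proof -
  let ?\<mu> = "int (card B) + int (card D) - int ((m + 1) div 2)"
  let ?c = "\<lambda>w. card {(x, y). x \<in> B \<and> y \<in> D \<and> zdiff m x y = w}"
  have nonzero_suffices: "(\<forall>w\<in>{1..<m}. P w) \<longleftrightarrow> (\<forall>w<m. P w)" if "P 0" for P :: "nat \<Rightarrow> bool"
    using that by (auto simp: Suc_le_eq)
  have symmetric_iff: "(\<forall>w\<in>{1..<m}. ?c w = ?c ((m - w) mod m)) \<longleftrightarrow> diff_symmetric m B D"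
    unfolding diff_symmetric_def by (rule nonzero_suffices) simp
  have "{1..m - 1} = {1..<m}"
    using \<open>odd m\<close> by (cases m) auto
  then have "OQS m f \<longleftrightarrow> (\<forall>w\<in>{1..<m}. cmod (autocorr m f w) = 1)"
    using assms(1,2) by (simp add: OQS_def)
  also have "\<dots> \<longleftrightarrow> (\<forall>w\<in>{1..<m}. int (Ncount m B D w) \<in> {?\<mu>, ?\<mu> + 1})
                   \<and> (\<forall>w\<in>{1..<m}. ?c w = ?c ((m - w) mod m))"
    using autocorr_unimodular_iff[OF assms] by auto
  also have "\<dots> \<longleftrightarrow> (\<forall>w\<in>{1..<m}. int (Ncount m B D w) \<in> {?\<mu>, ?\<mu> + 1})
                   \<and> diff_symmetric m B D"
    by (simp only: symmetric_iff)
  finally show ?thesis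
    using assms(3,4) by (auto simp: ASDS2_def)
qed

end
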